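(* Let $S\subset[0,\infty)$ with $0\in S$, and let $f\colon S\to[0,\infty)$ be a right-continuous decreasing function with $DP(\overline{f})\subset S$. Let $a,b\in S$ with $a<b$. Then: (1) If $0\leq\lambda<f(a)-f(b-)$, then for every $\mu>0$ there exists $c\in[a,b)\cap S$ with $\lambda<f(a)-f(c)$ and $f(a)-f(c-)<\lambda+\mu$. (2) For every $\varepsilon>0$ there exists a finite subset $F'=\{a=x'_0<x'_1<\cdots<x'_k=b\}\subset S$ such that $\max_{1\leq i\leq k}\{f(x'_{i-1})-f(x'_i-)\}<\varepsilon$.
   Context: For $S\subset[0,\infty)$ with $0\in S$, a function on $S$ is right-continuous if it is right-continuous for the relative topology of $S$. For a right-continuous decreasing $f\colon S\to[0,\infty)$ and $x\in\overline{S}$ (closure in $\mathbb{R}$), set $f(x+):=\sup\{f(y)\mid y\in(x,\infty)\cap S\}$ whenever $(x,\infty)\cap S\neq\emptyset$, and $f(x-):=\inf\{f(y)\mid y\in[0,x)\cap S\}$ if $x\neq0$, $f(0-):=f(0)$. Define $\overline{f}\colon\overline{S}\to[0,\infty)$ by $\overline{f}(x)=f(x)$ if $x\in S$, $\overline{f}(x)=f(x+)$ if $x\in\overline{S}\setminus S$ is a right accumulation point of $S$, and $\overline{f}(x)=f(x-)$ otherwise. With $\overline{f}(x-)$ defined by the same formula applied to $\overline{f}$ on $\overline{S}$, the set of left-jump points is $DP(\overline{f}):=\{x\in\overline{S}\setminus\{0\}\mid \overline{f}(x-)>\overline{f}(x)\}$. *)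

theory Defs
  imports "HOL-Analysis.Analysis"
begin

definition right_continuous_on :: "real set \<Rightarrow> (real \<Rightarrow> real) \<Rightarrow> bool" where
  "right_continuous_on S f \<longleftrightarrow> (\<forall>x\<in>S. continuous (at x within (S \<inter> {x..})) f)"

definition decreasing_on :: "real set \<Rightarrow> (real \<Rightarrow> real) \<Rightarrow> bool" where
  "decreasing_on S f \<longleftrightarrow> (\<forall>x\<in>S. \<forall>y\<in>S. x \<le> y \<longrightarrow> f y \<le> f x)"

definition right_lim :: "real set \<Rightarrow> (real \<Rightarrow> real) \<Rightarrow> real \<Rightarrow> real" where
  "right_lim S f x = Sup (f ` (S \<inter> {x<..}))"

definition left_lim :: "real set \<Rightarrow> (real \<Rightarrow> real) \<Rightarrow> real \<Rightarrow> real" where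
  "left_lim S f x = (if x = 0 then f 0 else Inf (f ` (S \<inter> {0..<x})))"

text \<open>The extension of f to the closure of S.\<close>
definition fbar :: "real set \<Rightarrow> (real \<Rightarrow> real) \<Rightarrow> real \<Rightarrow> real" where
  "fbar S f x = (if x \<in> S then f x
                 else if x islimpt (S \<inter> {x<..}) then right_lim S f x
                 else left_lim S f x)"

definition DP :: "real set \<Rightarrow> (real \<Rightarrow> real) \<Rightarrow> real set" where
  "DP S f = {x \<in> closure S - {0}. left_lim (closure S) (fbar S f) x > fbar S f x}"

end

theory Submission
  imports Defs
begin

text \<open>
  For (1), let \<open>c\<^sub>0\<close> be the infimum of the points of \<open>S \<inter> [a, b)\<close> at which the drop
  \<open>f a - f\<close> exceeds \<open>\<lambda>\<close>. Left of \<open>c\<^sub>0\<close> we have \<open>f \<ge> f a - \<lambda>\<close>, so \<open>f(c\<^sub>0-) \<ge> f a - \<lambda>\<close> and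
  \<open>c\<^sub>0\<close> is the required point if the infimum is attained. Otherwise \<open>c\<^sub>0\<close> is approached from
  the right by points of that set, and the bound \<open>f a - \<lambda>\<close> passes to \<open>f(c\<^sub>0+)\<close>: by
  right-continuity if \<open>c\<^sub>0 \<in> S\<close>, and because \<open>c\<^sub>0\<close> is not a left-jump point of \<open>fbar\<close> if
  \<open>c\<^sub>0 \<notin> S\<close>. Hence some point \<open>c\<close> just right of \<open>c\<^sub>0\<close> has \<open>f(c-) \<ge> f c > f a - \<lambda> - \<mu>\<close>.

  For (2), apply (1) repeatedly with \<open>\<lambda> = \<mu> = \<epsilon>/2\<close>: every step lowers \<open>f\<close> by more than
  \<open>\<epsilon>/2\<close>, so after finitely many steps the remaining drop to \<open>b-\<close> is below \<open>\<epsilon>\<close>.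
\<close>

lemma decreasing_onD:
  "decreasing_on S f \<Longrightarrow> x \<in> S \<Longrightarrow> y \<in> S \<Longrightarrow> x \<le> y \<Longrightarrow> f y \<le> f x"
  unfolding decreasing_on_def by blast

lemma bdd_above_image_decreasing:
  assumes "decreasing_on S f" and "s \<in> S" and "X \<subseteq> S \<inter> {s..}"
  shows "bdd_above (f ` X)"
  using assms by (intro bdd_aboveI2[of _ _ "f s"]) (auto intro: decreasing_onD)

lemma left_lim_geI:
  fixes S :: "real set"
  assumes "0 \<in> S" and "0 < t" and "\<And>y. y \<in> S \<Longrightarrow> 0 \<le> y \<Longrightarrow> y < t \<Longrightarrow> v \<le> f y"
  shows "v \<le> left_lim S f t"
proof -
  have "S \<inter> {0..<t} \<noteq> {}"
    using assms(1,2) by auto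
  then have "v \<le> Inf (f ` (S \<inter> {0..<t}))"
    by (intro cInf_greatest) (auto intro: assms(3))
  then show ?thesis
    using assms(2) by (simp add: left_lim_def)
qed

lemma left_lim_ge_self:
  fixes S :: "real set"
  assumes "decreasing_on S f" and "0 \<in> S" and "t \<in> S" and "0 \<le> t"
  shows "f t \<le> left_lim S f t"
proof (cases "t = 0")
  case True
  then show ?thesis by (simp add: left_lim_def)
next
  case False
  then show ?thesis
    using assms by (intro left_lim_geI) (auto intro: decreasing_onD)
qed

lemma fbar_eq_right_lim:
  fixes S :: "real set"
  assumes rc: "right_continuous_on S f" and dec: "decreasing_on S f"
    and lim: "c islimpt (S \<inter> {c<..})"
  shows "fbar S f c = right_lim S f c"
proof (cases "c \<in> S")
  case False
  then show ?thesis
    using lim by (simp add: fbar_def)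
next
  case True
  have "S \<inter> {c<..} \<noteq> {}"
    using lim islimpt_EMPTY by metis
  then have "right_lim S f c \<le> f c"
    unfolding right_lim_def using True dec by (intro cSup_least) (auto intro: decreasing_onD)
  moreover have "f c \<le> right_lim S f c"
  proof (rule tendsto_upperbound)
    have "(f \<longlongrightarrow> f c) (at c within S \<inter> {c..})"
      using rc True by (simp add: right_continuous_on_def continuous_within)
    then show "(f \<longlongrightarrow> f c) (at c within S \<inter> {c<..})"
      by (rule tendsto_within_subset) auto
    show "\<forall>\<^sub>F x in at c within S \<inter> {c<..}. f x \<le> right_lim S f c"
      unfolding eventually_at_filter right_lim_def
      using True dec
      by (intro always_eventually allI impI cSup_upper bdd_above_image_decreasing[of S f c]) auto
    show "\<not> trivial_limit (at c within S \<inter> {c<..})"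
      using lim by (simp add: trivial_limit_within)
  qed
  ultimately show ?thesis
    using True by (simp add: fbar_def)
qed

lemma fbar_ge_if_ge_before:
  fixes S :: "real set"
  assumes "0 \<in> S" and dec: "decreasing_on S f"
    and lb: "\<And>x. x \<in> S \<Longrightarrow> x < c \<Longrightarrow> v \<le> f x"
    and "0 \<le> y" and "y < c"
  shows "v \<le> fbar S f y"
proof -
  consider "y \<in> S"
    | "y \<notin> S" "y islimpt (S \<inter> {y<..})"
    | "y \<notin> S" "\<not> y islimpt (S \<inter> {y<..})"
    by blast
  then show ?thesis
  proof cases
    case 1
    then show ?thesis
      using lb \<open>y < c\<close> by (simp add: fbar_def)
  next
    case 2
    then obtain x where x: "x \<in> S" "y < x" "dist x y < c - y"
      using \<open>y < c\<close> unfolding islimpt_approachable by (meson IntD1 IntD2 diff_gt_0_iff_gt greaterThan_iff)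
    then have "v \<le> f x"
      by (intro lb) (auto simp: dist_real_def)
    also have "f x \<le> right_lim S f y"
      unfolding right_lim_def using x \<open>0 \<in> S\<close> \<open>0 \<le> y\<close>
      by (intro cSup_upper bdd_above_image_decreasing[OF dec, of 0]) auto
    finally show ?thesis
      using 2 by (simp add: fbar_def)
  next
    case 3
    have "0 < y"
      using 3(1) \<open>0 \<in> S\<close> \<open>0 \<le> y\<close> by (cases "y = 0") auto
    then have "v \<le> left_lim S f y"
      using \<open>0 \<in> S\<close> \<open>y < c\<close> by (intro left_lim_geI lb) auto
    then show ?thesis
      using 3 by (simp add: fbar_def)
  qed
qed

lemma left_lim_fbar_ge_if_ge_before:
  fixes S :: "real set"
  assumes "0 \<in> S" and "decreasing_on S f"
    and "\<And>x. x \<in> S \<Longrightarrow> x < c \<Longrightarrow> v \<le> f x"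
    and "0 < c"
  shows "v \<le> left_lim (closure S) (fbar S f) c"
  using assms closure_subset by (intro left_lim_geI fbar_ge_if_ge_before) auto

lemma fbar_ge_if_ge_upto:
  fixes S :: "real set"
  assumes S0: "S \<subseteq> {0..}" and "0 \<in> S" and dec: "decreasing_on S f"
    and dp: "DP S f \<subseteq> S" and "c \<in> closure S"
    and lb: "\<And>x. x \<in> S \<Longrightarrow> x \<le> c \<Longrightarrow> v \<le> f x"
  shows "v \<le> fbar S f c"
proof (cases "c \<in> S")
  case True
  then show ?thesis
    using lb by (simp add: fbar_def)
next
  case False
  have "c \<ge> 0"
    using closure_mono[OF S0] \<open>c \<in> closure S\<close> by auto
  then have "0 < c"
    using False \<open>0 \<in> S\<close> by (cases "c = 0") auto
  then have "left_lim (closure S) (fbar S f) c \<le> fbar S f c"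
    using False dp \<open>c \<in> closure S\<close> unfolding DP_def by auto
  moreover have "v \<le> left_lim (closure S) (fbar S f) c"
    using \<open>0 < c\<close> by (intro left_lim_fbar_ge_if_ge_before[OF \<open>0 \<in> S\<close> dec]) (auto intro: lb)
  ultimately show ?thesis
    by linarith
qed

lemma Inf_islimpt:
  fixes T :: "real set"
  assumes "T \<noteq> {}" and "bdd_below T" and "Inf T \<notin> T"
  shows "Inf T islimpt T"
  unfolding islimpt_approachable
proof (intro allI impI)
  fix e :: real
  assume "0 < e"
  then obtain t where "t \<in> T" "t < Inf T + e"
    using cInf_less_iff[OF assms(1,2), of "Inf T + e"] by auto
  moreover have "Inf T \<le> t"
    using \<open>t \<in> T\<close> \<open>bdd_below T\<close> by (rule cInf_lower)
  ultimately show "\<exists>x\<in>T. x \<noteq> Inf T \<and> dist x (Inf T) < e"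
    using \<open>Inf T \<notin> T\<close> by (intro bexI[of _ t]) (auto simp: dist_real_def)
qed

lemma exists_value_near_Inf:
  fixes S T :: "real set"
  assumes S0: "S \<subseteq> {0..}" and "0 \<in> S"
    and rc: "right_continuous_on S f" and dec: "decreasing_on S f"
    and dp: "DP S f \<subseteq> S"
    and TS: "T \<subseteq> S" and "T \<noteq> {}" and "Inf T \<notin> T"
    and lb: "\<And>x. x \<in> S \<Longrightarrow> x \<le> Inf T \<Longrightarrow> v \<le> f x"
    and "0 < m"
  obtains t where "t \<in> T" and "v - m < f t"
proof -
  define c where "c = Inf T"
  have "bdd_below T"
    using TS S0 by (intro bdd_belowI[of _ 0]) auto
  have "c \<ge> 0"
    unfolding c_def using \<open>T \<noteq> {}\<close> TS S0 by (intro cInf_greatest) auto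
  have "T \<subseteq> S \<inter> {c<..}"
  proof
    fix t
    assume "t \<in> T"
    then have "c \<le> t" and "t \<noteq> c"
      using \<open>bdd_below T\<close> \<open>Inf T \<notin> T\<close> unfolding c_def by (auto intro: cInf_lower)
    then show "t \<in> S \<inter> {c<..}"
      using TS \<open>t \<in> T\<close> by auto
  qed
  with Inf_islimpt[OF \<open>T \<noteq> {}\<close> \<open>bdd_below T\<close> \<open>Inf T \<notin> T\<close>]
  have lim: "c islimpt (S \<inter> {c<..})"
    unfolding c_def by (rule islimpt_subset)
  have "c \<in> closure S"
    using closure_contains_Inf[OF \<open>T \<noteq> {}\<close> \<open>bdd_below T\<close>] closure_mono[OF TS]
    unfolding c_def by blast
  then have "v \<le> fbar S f c"
    using fbar_ge_if_ge_upto[OF S0 \<open>0 \<in> S\<close> dec dp] lb unfolding c_def by blast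
  then have "v - m < Sup (f ` (S \<inter> {c<..}))"
    using fbar_eq_right_lim[OF rc dec lim] \<open>0 < m\<close> by (simp add: right_lim_def)
  moreover have "S \<inter> {c<..} \<noteq> {}"
    using lim islimpt_EMPTY by metis
  moreover have "bdd_above (f ` (S \<inter> {c<..}))"
    using \<open>0 \<in> S\<close> \<open>c \<ge> 0\<close> by (intro bdd_above_image_decreasing[OF dec, of 0]) auto
  ultimately obtain z where z: "z \<in> S" "c < z" "v - m < f z"
    by (auto simp: less_cSup_iff)
  obtain t where "t \<in> T" "t < z"
    using cInf_less_iff[OF \<open>T \<noteq> {}\<close> \<open>bdd_below T\<close>] z(2) unfolding c_def by blast
  then have "f z \<le> f t"
    using TS z by (intro decreasing_onD[OF dec]) auto
  with z \<open>t \<in> T\<close> show ?thesis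
    using that by fastforce
qed

lemma exists_left_lim_near_Inf:
  fixes S T :: "real set"
  assumes S0: "S \<subseteq> {0..}" and "0 \<in> S"
    and rc: "right_continuous_on S f" and dec: "decreasing_on S f"
    and dp: "DP S f \<subseteq> S"
    and TS: "T \<subseteq> S" and "T \<noteq> {}" and "0 \<notin> T"
    and lb: "\<And>x. x \<in> S \<Longrightarrow> x \<notin> T \<Longrightarrow> x \<le> Inf T \<Longrightarrow> v \<le> f x"
    and "0 < m"
  obtains t where "t \<in> T" and "v - m < left_lim S f t"
proof -
  have "bdd_below T"
    using TS S0 by (intro bdd_belowI[of _ 0]) auto
  have before_Inf: "x \<notin> T" if "x < Inf T" for x
    using that \<open>bdd_below T\<close> by (meson cInf_lower not_le)
  show ?thesis
  proof (cases "Inf T \<in> T")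
    case True
    then have "0 < Inf T"
      using TS S0 \<open>0 \<notin> T\<close> by (metis atLeast_iff order_le_less subsetD)
    then have "v \<le> left_lim S f (Inf T)"
      using \<open>0 \<in> S\<close> by (intro left_lim_geI lb before_Inf) auto
    then show ?thesis
      using that True \<open>0 < m\<close> by fastforce
  next
    case False
    have "v \<le> f x" if "x \<in> S" "x \<le> Inf T" for x
      using that False before_Inf by (cases "x = Inf T") (auto intro: lb)
    then obtain t where "t \<in> T" "v - m < f t"
      using exists_value_near_Inf[OF S0 \<open>0 \<in> S\<close> rc dec dp TS \<open>T \<noteq> {}\<close> False] \<open>0 < m\<close>
      by blast
    moreover have "f t \<le> left_lim S f t"
      using \<open>t \<in> T\<close> TS S0 \<open>0 \<in> S\<close> by (intro left_lim_ge_self[OF dec]) auto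
    ultimately show ?thesis
      using that by fastforce
  qed
qed

lemma exists_level_crossing:
  fixes S :: "real set"
  assumes S0: "S \<subseteq> {0..}" and "0 \<in> S"
    and rc: "right_continuous_on S f" and dec: "decreasing_on S f"
    and dp: "DP S f \<subseteq> S"
    and "a \<in> S" and "a < b" and "0 \<le> l" and l_less: "l < f a - left_lim S f b" and "0 < m"
  shows "\<exists>c \<in> {a..<b} \<inter> S. l < f a - f c \<and> f a - left_lim S f c < l + m"
proof -
  define T where "T = {c \<in> S. a \<le> c \<and> c < b \<and> f c < f a - l}"
  have mem_T: "t \<in> T \<longleftrightarrow> t \<in> S \<and> a \<le> t \<and> t < b \<and> f t < f a - l" for t
    by (simp add: T_def)
  have lb: "f a - l \<le> f y" if "y \<in> S" "y \<notin> T" "y < b" for y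
  proof (cases "y < a")
    case True
    then show ?thesis
      using decreasing_onD[OF dec \<open>y \<in> S\<close> \<open>a \<in> S\<close>] \<open>0 \<le> l\<close> by linarith
  next
    case False
    then show ?thesis
      using that by (auto simp: mem_T)
  qed
  have "a \<ge> 0"
    using S0 \<open>a \<in> S\<close> by auto
  have "T \<noteq> {}"
  proof
    assume "T = {}"
    then have "f a - l \<le> left_lim S f b"
      using \<open>0 \<in> S\<close> \<open>a \<ge> 0\<close> \<open>a < b\<close> by (intro left_lim_geI lb) auto
    with l_less show False
      by linarith
  qed
  then obtain t\<^sub>0 where "t\<^sub>0 \<in> T"
    by blast
  moreover have "bdd_below T"
    by (intro bdd_belowI[of _ a]) (auto simp: mem_T)
  ultimately have "Inf T < b"
    using cInf_lower[OF \<open>t\<^sub>0 \<in> T\<close>] by (auto simp: mem_T)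
  then have "f a - l \<le> f x" if "x \<in> S" "x \<notin> T" "x \<le> Inf T" for x
    using that by (intro lb) auto
  moreover have "T \<subseteq> S" and "0 \<notin> T"
    using \<open>a \<ge> 0\<close> \<open>0 \<le> l\<close> by (auto simp: mem_T)
  ultimately obtain t where "t \<in> T" and "f a - l - m < left_lim S f t"
    using exists_left_lim_near_Inf[OF S0 \<open>0 \<in> S\<close> rc dec dp _ \<open>T \<noteq> {}\<close>] \<open>0 < m\<close> by blast
  then show ?thesis
    by (intro bexI[of _ t]) (auto simp: mem_T)
qed

definition fine_partition :: "real set \<Rightarrow> (real \<Rightarrow> real) \<Rightarrow> real \<Rightarrow> real \<Rightarrow> real \<Rightarrow> bool" where
  "fine_partition S f \<epsilon> a b \<longleftrightarrow> (\<exists>(x :: nat \<Rightarrow> real) k.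
     x 0 = a \<and> x k = b \<and> (\<forall>i\<le>k. x i \<in> S) \<and> (\<forall>i<k. x i < x (Suc i)) \<and>
     (\<forall>i\<in>{1..k}. f (x (i - 1)) - left_lim S f (x i) < \<epsilon>))"

lemma fine_partition_refl: "b \<in> S \<Longrightarrow> fine_partition S f \<epsilon> b b"
  unfolding fine_partition_def by (intro exI[of _ "\<lambda>_. b"] exI[of _ 0]) auto

lemma fine_partition_Cons:
  assumes "a \<in> S" and "a < c" and step: "f a - left_lim S f c < \<epsilon>"
    and "fine_partition S f \<epsilon> c b"
  shows "fine_partition S f \<epsilon> a b"
proof -
  obtain x k where x: "x 0 = c" "x k = b" "\<forall>i\<le>k. x i \<in> S" "\<forall>i<k. x i < x (Suc i)"
      "\<forall>i\<in>{1..k}. f (x (i - 1)) - left_lim S f (x i) < \<epsilon>"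
    using assms(4) unfolding fine_partition_def by blast
  define y where "y i = (if i = 0 then a else x (i - 1))" for i
  have "y 0 = a" and "y (Suc k) = b"
    using x(2) by (auto simp: y_def)
  moreover have "\<forall>i\<le>Suc k. y i \<in> S"
    using x(3) \<open>a \<in> S\<close> by (auto simp: y_def)
  moreover have "y i < y (Suc i)" if "i < Suc k" for i
    using that x(1,4) \<open>a < c\<close> by (cases i) (auto simp: y_def)
  moreover have "f (y (i - 1)) - left_lim S f (y i) < \<epsilon>" if "i \<in> {1..Suc k}" for i
  proof (cases "i = 1")
    case True
    then show ?thesis
      using step x(1) by (simp add: y_def)
  next
    case False
    then have "i - 1 \<in> {1..k}"
      using that by auto
    then have "f (x (i - 1 - 1)) - left_lim S f (x (i - 1)) < \<epsilon>"
      using x(5) by blast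
    moreover have "i - 1 \<noteq> 0" and "i \<noteq> 0"
      using False that by auto
    ultimately show ?thesis
      by (simp add: y_def)
  qed
  ultimately show ?thesis
    unfolding fine_partition_def by blast
qed

lemma fine_partition_if_drop_less:
  fixes S :: "real set"
  assumes S0: "S \<subseteq> {0..}" and "0 \<in> S"
    and rc: "right_continuous_on S f" and dec: "decreasing_on S f"
    and dp: "DP S f \<subseteq> S"
    and "b \<in> S" and "0 < \<epsilon>"
  shows "p \<in> S \<Longrightarrow> p \<le> b \<Longrightarrow> f p - f b < real n * (\<epsilon> / 2) \<Longrightarrow> fine_partition S f \<epsilon> p b"
proof (induction n arbitrary: p)
  case 0
  then show ?case
    using decreasing_onD[OF dec \<open>p \<in> S\<close> \<open>b \<in> S\<close>] by simp
next
  case (Suc n)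
  consider "p = b" | "p < b" "f p - left_lim S f b < \<epsilon>" | "p < b" "\<epsilon> \<le> f p - left_lim S f b"
    using Suc.prems(2) by fastforce
  then show ?case
  proof cases
    case 1
    then show ?thesis
      using \<open>b \<in> S\<close> by (simp add: fine_partition_refl)
  next
    case 2
    then show ?thesis
      using Suc.prems(1) \<open>b \<in> S\<close> by (auto intro: fine_partition_Cons[OF _ _ _ fine_partition_refl])
  next
    case 3
    then obtain c where c: "c \<in> {p..<b} \<inter> S" "\<epsilon> / 2 < f p - f c"
        "f p - left_lim S f c < \<epsilon> / 2 + \<epsilon> / 2"
      using exists_level_crossing[OF S0 \<open>0 \<in> S\<close> rc dec dp Suc.prems(1), of b "\<epsilon> / 2" "\<epsilon> / 2"]
        \<open>0 < \<epsilon>\<close> by auto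
    have "p < c"
      using c \<open>0 < \<epsilon>\<close> by (cases "p = c") auto
    moreover have "fine_partition S f \<epsilon> c b"
      using c Suc.prems(3) by (intro Suc.IH) (auto simp: algebra_simps)
    ultimately show ?thesis
      using c(3) Suc.prems(1) by (auto intro: fine_partition_Cons[of p S c])
  qed
qed

lemma fine_partition_exists:
  fixes S :: "real set"
  assumes "S \<subseteq> {0..}" and "0 \<in> S"
    and "right_continuous_on S f" and "decreasing_on S f"
    and "DP S f \<subseteq> S"
    and "a \<in> S" and "b \<in> S" and "a \<le> b" and "0 < \<epsilon>"
  shows "fine_partition S f \<epsilon> a b"
proof -
  obtain n where "(f a - f b) / (\<epsilon> / 2) < real n"
    using reals_Archimedean2 by blast
  then have "f a - f b < real n * (\<epsilon> / 2)"
    using \<open>0 < \<epsilon>\<close> by (simp add: field_simps)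
  then show ?thesis
    using fine_partition_if_drop_less[OF assms(1-5,7,9)] \<open>a \<in> S\<close> \<open>a \<le> b\<close> by blast
qed

theorem lemma2p4:
  fixes S :: "real set" and f :: "real \<Rightarrow> real" and a b :: real
  assumes "S \<subseteq> {0..}" and "0 \<in> S"
    and "\<forall>x\<in>S. f x \<ge> 0"
    and "right_continuous_on S f" and "decreasing_on S f"
    and "DP S f \<subseteq> S"
    and "a \<in> S" and "b \<in> S" and "a < b"
  shows "(\<forall>l m :: real. 0 \<le> l \<and> l < f a - left_lim S f b \<and> m > 0 \<longrightarrow>
            (\<exists>c \<in> {a..<b} \<inter> S. l < f a - f c \<and> f a - left_lim S f c < l + m))
       \<and> (\<forall>\<epsilon>>0. \<exists>(x :: nat \<Rightarrow> real) k.
            x 0 = a \<and> x k = b \<and> (\<forall>i\<le>k. x i \<in> S) \<and> (\<forall>i<k. x i < x (Suc i)) \<and>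
            (\<forall>i\<in>{1..k}. f (x (i - 1)) - left_lim S f (x i) < \<epsilon>))"
  using exists_level_crossing[OF assms(1,2,4-7,9)]
    fine_partition_exists[OF assms(1,2,4-8)] \<open>a < b\<close>
  unfolding fine_partition_def by auto

end
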